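(* There exist constants $C,\tilde C>0$ such that for every $\beta_0\in\{0,1/3\}$, every nonnegative $f\in L^1_{loc}(\mathbb{D})$ and every $z\in\mathbb{D}$, $$\tilde C\,P^{\beta_0}f(z)\le P_B^+f(z)\le C\sum_{\beta\in\{0,1/3\}}P^{\beta}f(z).$$
   Context: $\mathbb{D}$ is the open unit disc with normalized area measure $dA$ ($A(\mathbb{D})=1$). For $\beta\in\{0,1/3\}$, the dyadic grid $\mathcal{D}^\beta$ on $\mathbb{T}$ consists of the arcs $\{e^{i\theta}:\theta\in[2\pi(2^{-j}m+\beta),\,2\pi(2^{-j}(m+1)+\beta))\}$ for integers $j\ge0$, $0\le m<2^j$. For an arc $I$, $|I|$ is its normalized length ($|\mathbb{T}|=1$) and $Q_I=\{re^{i\theta}:1-|I|\le r<1,\ e^{i\theta}\in I\}$ is its Carleson box. The dyadic operator is $P^\beta f(z)=\sum_{I\in\mathcal{D}^\beta}\Big(\frac{1}{|I|^2}\int_{Q_I}f\,dA\Big)1_{Q_I}(z)$, and the maximal Bergman projection is $P_B^+f(z)=\int_{\mathbb{D}}\frac{f(\zeta)}{|1-\bar\zeta z|^2}dA(\zeta)$. Values in $[0,\infty]$ are allowed. *)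

theory Defs
  imports "HOL-Analysis.Analysis"
begin

definition unit_disc :: "complex set" where
  "unit_disc = {z. norm z < 1}"

definition dA_integral :: "complex set \<Rightarrow> (complex \<Rightarrow> real) \<Rightarrow> ennreal" where
  "dA_integral S f = ennreal (1 / pi) * (\<integral>\<^sup>+ \<zeta> \<in> S. ennreal (f \<zeta>) \<partial>lborel)"

definition dyadic_arc :: "real \<Rightarrow> nat \<Rightarrow> nat \<Rightarrow> complex set" where
  "dyadic_arc \<beta> j m = {cis \<theta> | \<theta>.
     2 * pi * ((1/2) ^ j * real m + \<beta>) \<le> \<theta> \<and> \<theta> < 2 * pi * ((1/2) ^ j * real (m + 1) + \<beta>)}"

definition carleson_box :: "real \<Rightarrow> nat \<Rightarrow> nat \<Rightarrow> complex set" where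
  "carleson_box \<beta> j m = {complex_of_real r * cis \<theta> | r \<theta>.
     1 - (1/2) ^ j \<le> r \<and> r < 1 \<and> cis \<theta> \<in> dyadic_arc \<beta> j m}"

definition dyadic_op :: "real \<Rightarrow> (complex \<Rightarrow> real) \<Rightarrow> complex \<Rightarrow> ennreal" where
  "dyadic_op \<beta> f z = (\<Sum>j. \<Sum>m<2 ^ j.
     ennreal (1 / ((1/2) ^ j) ^ 2) * dA_integral (carleson_box \<beta> j m) f
       * indicator (carleson_box \<beta> j m) z)"

definition bergman_max :: "(complex \<Rightarrow> real) \<Rightarrow> complex \<Rightarrow> ennreal" where
  "bergman_max f z = dA_integral unit_disc (\<lambda>\<zeta>. f \<zeta> / (norm (1 - cnj \<zeta> * z)) ^ 2)"

definition nonneg_L1loc :: "(complex \<Rightarrow> real) \<Rightarrow> bool" where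
  "nonneg_L1loc f \<longleftrightarrow> (\<forall>z\<in>unit_disc. f z \<ge> 0) \<and>
     (\<forall>K. compact K \<and> K \<subseteq> unit_disc \<longrightarrow> set_integrable lborel K f)"

end

theory Submission
  imports Defs "HOL-Library.Real_Mod"
begin

(* Both operators integrate f against a nonnegative kernel: P_B^+ against |1 - cnj \<zeta> z|^-2 and
   P^\<beta> against K_\<beta>(z,\<zeta>) = sum of |I|^-2 = 4^j over the boxes Q_I of D^\<beta> containing both points,
   so it suffices to compare the kernels pointwise.
   Two points of a common box of generation j satisfy |1 - cnj \<zeta> z| \<le> 10 * 2^-j, and the boxes of
   one generation are disjoint; hence K_\<beta> is a geometric sum of those 4^j with 4^j \<le> 100 |1 - cnj \<zeta> z|^-2.
   Conversely |1 - cnj \<zeta> z| dominates 1 - |z|, 1 - |\<zeta>| and the angular distance of z and \<zeta>.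
   As 1/3 has distance at least 2^-j/3 from the grid 2^-j \<int>, every arc shorter than 2^-j/3 lies in a
   single generation-j arc of D^0 or of D^(1/3) (the one-third trick); choosing 2^-j comparable to
   |1 - cnj \<zeta> z| yields a common box with |I| \<le> 8 |1 - cnj \<zeta> z|. *)

lemma three_not_dvd_power_two: "\<not> (3::int) dvd 2 ^ j"
proof
  assume "(3::int) dvd 2 ^ j"
  moreover have "coprime (3::int) (2 ^ j)"
    by simp
  ultimately have "is_unit (3::int)"
    by (metis coprime_absorb_left)
  then show False
    by (simp add: zdvd1_eq)
qed

lemma exists_power_bracket:
  fixes q x :: real
  assumes "0 < q" "q < 1" "0 < x" "x \<le> 1"
  obtains j where "q ^ Suc j < x" "x \<le> q ^ j"
proof -
  obtain n where "q ^ n < x"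
    using real_arch_pow_inv[OF assms(3,2)] by blast
  define j0 where "j0 = (LEAST n. q ^ n < x)"
  have "q ^ j0 < x"
    unfolding j0_def by (rule LeastI) fact
  moreover have "j0 \<noteq> 0"
    using \<open>q ^ j0 < x\<close> assms(4) by (intro notI) simp
  then have "j0 - 1 < j0"
    by simp
  then have "\<not> q ^ (j0 - 1) < x"
    unfolding j0_def by (rule not_less_Least)
  ultimately show ?thesis
    using that[of "j0 - 1"] \<open>j0 \<noteq> 0\<close> by simp
qed

lemma atLeastLessThan_eq_UN_atLeastAtMost: "{a..<b::real} = (\<Union>n. {a..b - 1 / Suc n})"
proof (intro equalityI subsetI)
  fix x assume "x \<in> {a..<b}"
  then obtain n where "inverse (Suc n) < b - x"
    using reals_Archimedean[of "b - x"] by auto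
  then have "x \<in> {a..b - 1 / Suc n}"
    using \<open>x \<in> {a..<b}\<close> by (simp add: inverse_eq_divide)
  then show "x \<in> (\<Union>n. {a..b - 1 / Suc n})"
    by blast
next
  fix x assume "x \<in> (\<Union>n. {a..b - 1 / Suc n})"
  then obtain n where "a \<le> x" "x \<le> b - 1 / Suc n"
    by auto
  moreover have "0 < 1 / real (Suc n)"
    by simp
  ultimately have "x < b"
    by linarith
  with \<open>a \<le> x\<close> show "x \<in> {a..<b}"
    by simp
qed

lemma continuous_image_Times_atLeastLessThan_borel:
  fixes g :: "real \<times> real \<Rightarrow> 'a::t2_space"
  assumes "continuous_on UNIV g"
  shows "g ` ({a..<b} \<times> {c..<d}) \<in> sets borel"
proof -
  have eq: "g ` ({a..<b} \<times> {c..<d}) = (\<Union>n. \<Union>k. g ` ({a..b - 1 / Suc n} \<times> {c..d - 1 / Suc k}))"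
    by (subst (1 2) atLeastLessThan_eq_UN_atLeastAtMost) blast
  have "g ` ({a..b - 1 / Suc n} \<times> {c..d - 1 / Suc k}) \<in> sets borel" for n k
    using assms by (intro borel_closed compact_imp_closed compact_continuous_image compact_Times)
      (auto intro: continuous_on_subset)
  then show ?thesis
    unfolding eq by (intro sets.countable_UN'' countableI_type)
qed

section \<open>Distances on the circle and in the disc\<close>

lemma cis_2pi_eq_imp_eq:
  assumes "cis (2 * pi * s) = cis (2 * pi * t)" "\<bar>s - t\<bar> < 1"
  shows "s = t"
proof -
  have "\<bar>2 * pi * s - 2 * pi * t\<bar> < \<bar>2 * pi\<bar>"
    using assms(2) by (simp add: abs_mult flip: right_diff_distrib)
  moreover have "[2 * pi * s = 2 * pi * t] (rmod (2 * pi))"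
    using assms(1) cis_eq_iff by blast
  ultimately have "2 * pi * s = 2 * pi * t"
    using rcong_imp_eq by blast
  then show ?thesis by simp
qed

lemma cis_2pi_add_of_int: "cis (2 * pi * (t + of_int n)) = cis (2 * pi * t)"
  by (simp add: distrib_left flip: cis_mult)

lemma polar_decomposition_2pi:
  obtains t where "z = of_real (cmod z) * cis (2 * pi * t)" "-1/2 < t" "t \<le> 1/2"
proof
  show "z = of_real (cmod z) * cis (2 * pi * (Arg z / (2 * pi)))"
    using rcis_cmod_Arg[of z] by (simp add: rcis_def)
  show "-1/2 < Arg z / (2 * pi)" "Arg z / (2 * pi) \<le> 1/2"
    using Arg_bounded[of z] by (simp_all add: field_simps)
qed

lemma norm_1_minus_cis_le: "cmod (1 - cis u) \<le> \<bar>u\<bar>"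
proof -
  have "cmod (1 - cis u) = cmod (exp (\<i> * complex_of_real u) - 1)"
    by (metis cis_conv_exp norm_minus_commute)
  also have "\<dots> = 2 * \<bar>sin (u/2)\<bar>" by (rule dist_exp_i_1)
  also have "\<dots> \<le> \<bar>u\<bar>" using abs_sin_x_le_abs_x[of "u/2"] by linarith
  finally show ?thesis .
qed

lemma norm_1_minus_rcis_power2:
  "(cmod (1 - of_real \<rho> * cis u))\<^sup>2 = (1 - \<rho>)\<^sup>2 + 4 * \<rho> * (sin (u/2))\<^sup>2"
proof -
  have "(cmod (1 - of_real \<rho> * cis u))\<^sup>2 = (1 - \<rho> * cos u)\<^sup>2 + (\<rho> * sin u)\<^sup>2"
    by (simp add: cmod_power2)
  also have "\<dots> = 1 - 2 * \<rho> * cos u + \<rho>\<^sup>2 * ((sin u)\<^sup>2 + (cos u)\<^sup>2)"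
    by algebra
  also have "(sin u)\<^sup>2 + (cos u)\<^sup>2 = 1" by simp
  also have "cos u = 1 - 2 * (sin (u/2))\<^sup>2"
    using cos_double_sin[of "u/2"] by simp
  finally show ?thesis by (simp add: power2_eq_square algebra_simps)
qed

lemma sin_ge_third:
  fixes x :: real
  assumes "0 \<le> x" "x \<le> 2"
  shows "x / 3 \<le> sin x"
proof -
  have "\<bar>sin x - (\<Sum>m<3. sin_coeff m * x ^ m)\<bar> \<le> inverse (fact 3) * \<bar>x\<bar> ^ 3"
    by (rule Maclaurin_sin_bound)
  moreover have "(\<Sum>m<3. sin_coeff m * x ^ m) = x" "(fact 3 :: real) = 6"
    by (simp_all add: numeral_3_eq_3 sin_coeff_def)
  ultimately have "x - x ^ 3 / 6 \<le> sin x"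
    using assms by (simp add: abs_if field_simps split: if_splits)
  moreover have "x * x\<^sup>2 \<le> x * 2\<^sup>2"
    using assms by (intro mult_left_mono power_mono) auto
  ultimately show ?thesis
    by (simp add: power3_eq_cube power2_eq_square)
qed

lemma min_le_abs_sin_pi:
  assumes "\<bar>v\<bar> < 1"
  shows "min \<bar>v\<bar> (1 - \<bar>v\<bar>) \<le> \<bar>sin (pi * v)\<bar>"
proof -
  have near: "w \<le> sin (pi * w)" if "0 \<le> w" "w \<le> 1/2" for w
  proof -
    have "pi * w \<le> 4 * (1/2)" "3 * w \<le> pi * w"
      using that pi_gt3 pi_less_4 by (intro mult_mono; simp)+
    then show ?thesis
      using sin_ge_third[of "pi * w"] that by simp
  qed
  have "\<bar>sin (pi * v)\<bar> = sin (pi * \<bar>v\<bar>)"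
  proof (cases "0 \<le> v")
    case True
    then show ?thesis using sin_ge_zero[of "pi * v"] assms by simp
  next
    case False
    have "pi * - v \<le> pi * 1"
      using assms by (intro mult_left_mono) auto
    moreover have "pi * v \<le> 0"
      using False by (simp add: mult_nonneg_nonpos)
    ultimately show ?thesis using sin_ge_zero[of "pi * - v"] False by simp
  qed
  moreover have "sin (pi * \<bar>v\<bar>) = sin (pi * (1 - \<bar>v\<bar>))"
    using sin_pi_minus[of "pi * \<bar>v\<bar>"] by (simp add: algebra_simps)
  ultimately show ?thesis
    using near[of "\<bar>v\<bar>"] near[of "1 - \<bar>v\<bar>"] assms by (cases "\<bar>v\<bar> \<le> 1/2") auto
qed

lemma norm_1_minus_cnj_mult_lower_bounds:
  fixes r \<rho> s t :: real
  assumes "0 \<le> r" "r \<le> 1" "0 \<le> \<rho>" "\<rho> \<le> 1" "\<bar>s - t\<bar> < 1"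
  defines "D \<equiv> cmod (1 - cnj (of_real \<rho> * cis (2 * pi * t)) * (of_real r * cis (2 * pi * s)))"
  shows "1 - r \<le> D" "1 - \<rho> \<le> D" "min \<bar>s - t\<bar> (1 - \<bar>s - t\<bar>) \<le> D"
proof -
  define p where "p = r * \<rho>"
  have p: "0 \<le> p" "p \<le> r" "p \<le> \<rho>"
    unfolding p_def using assms by (auto simp: mult_left_le mult_left_le_one_le)
  have "cnj (of_real \<rho> * cis (2 * pi * t)) * (of_real r * cis (2 * pi * s))
      = of_real p * cis (2 * pi * s - 2 * pi * t)"
    unfolding p_def by (simp add: cis_cnj cis_mult algebra_simps)
  moreover have "(2 * pi * s - 2 * pi * t) / 2 = pi * (s - t)"
    by (simp add: diff_divide_distrib right_diff_distrib)
  ultimately have D2: "D\<^sup>2 = (1 - p)\<^sup>2 + 4 * p * (sin (pi * (s - t)))\<^sup>2"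
    unfolding D_def using norm_1_minus_rcis_power2[of p "2 * pi * s - 2 * pi * t"] by simp
  have D0: "0 \<le> D"
    unfolding D_def by simp
  have "(1 - p)\<^sup>2 \<le> D\<^sup>2"
    unfolding D2 using p by simp
  then have radial: "1 - p \<le> D"
    using D0 by (rule power2_le_imp_le)
  then show "1 - r \<le> D" "1 - \<rho> \<le> D"
    using p by linarith+
  let ?\<delta> = "min \<bar>s - t\<bar> (1 - \<bar>s - t\<bar>)"
  show "?\<delta> \<le> D"
  proof (cases "1/4 \<le> p")
    case True
    have "0 \<le> ?\<delta>"
      using assms(5) by simp
    then have "?\<delta>\<^sup>2 \<le> \<bar>sin (pi * (s - t))\<bar>\<^sup>2"
      using min_le_abs_sin_pi[OF assms(5)] by (rule power_mono[rotated])
    also have "\<dots> = (sin (pi * (s - t)))\<^sup>2"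
      by simp
    also have "\<dots> \<le> 4 * p * (sin (pi * (s - t)))\<^sup>2"
      using True by (simp add: mult_le_cancel_right1)
    also have "\<dots> \<le> D\<^sup>2"
      unfolding D2 by simp
    finally show ?thesis
      using D0 by (rule power2_le_imp_le)
  next
    case False
    then show ?thesis
      using radial by linarith
  qed
qed

lemma norm_1_minus_cnj_mult_bounds:
  assumes "z \<in> unit_disc" "\<zeta> \<in> unit_disc"
  shows "0 < cmod (1 - cnj \<zeta> * z)" "cmod (1 - cnj \<zeta> * z) \<le> 2"
proof -
  have "cmod \<zeta> * cmod z \<le> cmod z" "cmod z < 1" "cmod \<zeta> < 1"
    using assms unfolding unit_disc_def by (auto intro: mult_left_le_one_le)
  then have "cmod (cnj \<zeta> * z) < 1"
    by (simp add: norm_mult)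
  moreover have "1 - cmod (cnj \<zeta> * z) \<le> cmod (1 - cnj \<zeta> * z)"
    using norm_triangle_ineq2[of 1 "cnj \<zeta> * z"] by simp
  moreover have "cmod (1 - cnj \<zeta> * z) \<le> 1 + cmod (cnj \<zeta> * z)"
    using norm_triangle_ineq4[of 1 "cnj \<zeta> * z"] by simp
  ultimately show "0 < cmod (1 - cnj \<zeta> * z)" "cmod (1 - cnj \<zeta> * z) \<le> 2"
    by linarith+
qed

lemma short_arc_interval:
  fixes s t :: real
  assumes "\<bar>s - t\<bar> < 1"
  obtains lo hi s' t' where "hi - lo = min \<bar>s - t\<bar> (1 - \<bar>s - t\<bar>)"
    "lo \<le> s'" "s' \<le> hi" "lo \<le> t'" "t' \<le> hi"
    "cis (2 * pi * s') = cis (2 * pi * s)" "cis (2 * pi * t') = cis (2 * pi * t)"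
proof -
  have shift: "cis (2 * pi * (u + 1)) = cis (2 * pi * u)" for u
    using cis_2pi_add_of_int[of u 1] by simp
  consider "\<bar>s - t\<bar> \<le> 1/2" | "1/2 < t - s" | "1/2 < s - t"
    by linarith
  then show ?thesis
  proof cases
    case 1
    then show ?thesis
      using that[of "max s t" "min s t" s t] by auto
  next
    case 2
    then show ?thesis
      using that[of "s + 1" t "s + 1" t] shift assms by auto
  next
    case 3
    then show ?thesis
      using that[of "t + 1" s s "t + 1"] shift assms by auto
  qed
qed

section \<open>Carleson boxes\<close>

lemma mem_carleson_box_iff:
  "w \<in> carleson_box \<beta> j m \<longleftrightarrow> (\<exists>r t. w = of_real r * cis (2 * pi * t) \<and>
     1 - (1/2)^j \<le> r \<and> r < 1 \<and> (1/2)^j * real m + \<beta> \<le> t \<and> t < (1/2)^j * real (m + 1) + \<beta>)"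
proof
  assume "w \<in> carleson_box \<beta> j m"
  then obtain r \<theta> where w: "w = of_real r * cis \<theta>" "1 - (1/2)^j \<le> r" "r < 1"
      "2 * pi * ((1/2)^j * real m + \<beta>) \<le> \<theta>" "\<theta> < 2 * pi * ((1/2)^j * real (m + 1) + \<beta>)"
    unfolding carleson_box_def dyadic_arc_def by auto
  have "\<theta> = 2 * pi * (\<theta> / (2 * pi))"
    by simp
  moreover have "(1/2)^j * real m + \<beta> \<le> \<theta> / (2 * pi)" "\<theta> / (2 * pi) < (1/2)^j * real (m + 1) + \<beta>"
    using w(4,5) by (simp_all add: field_simps del: of_nat_Suc)
  ultimately show "\<exists>r t. w = of_real r * cis (2 * pi * t) \<and> 1 - (1/2)^j \<le> r \<and> r < 1 \<and>
      (1/2)^j * real m + \<beta> \<le> t \<and> t < (1/2)^j * real (m + 1) + \<beta>"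
    using w(1-3) by metis
next
  assume "\<exists>r t. w = of_real r * cis (2 * pi * t) \<and> 1 - (1/2)^j \<le> r \<and> r < 1 \<and>
      (1/2)^j * real m + \<beta> \<le> t \<and> t < (1/2)^j * real (m + 1) + \<beta>"
  then obtain r t where w: "w = of_real r * cis (2 * pi * t)" "1 - (1/2)^j \<le> r" "r < 1"
      "(1/2)^j * real m + \<beta> \<le> t" "t < (1/2)^j * real (m + 1) + \<beta>"
    by blast
  have "cis (2 * pi * t) \<in> dyadic_arc \<beta> j m"
    unfolding dyadic_arc_def using w(4,5) by (auto simp del: of_nat_Suc)
  then show "w \<in> carleson_box \<beta> j m"
    unfolding carleson_box_def using w(1-3) by blast
qed

lemma carleson_box_subset_unit_disc: "carleson_box \<beta> j m \<subseteq> unit_disc"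
proof
  fix w assume "w \<in> carleson_box \<beta> j m"
  then obtain r t where w: "w = of_real r * cis (2 * pi * t)" "1 - (1/2)^j \<le> r" "r < 1"
    unfolding mem_carleson_box_iff by blast
  moreover have "(1/2::real)^j \<le> 1"
    by (simp add: power_le_one)
  ultimately show "w \<in> unit_disc"
    unfolding unit_disc_def by (simp add: norm_mult)
qed

lemma polar_mem_carleson_box:
  fixes k :: int
  assumes "(1/2)^j * of_int k + \<beta> \<le> t" "t < (1/2)^j * (of_int k + 1) + \<beta>"
    and "1 - (1/2)^j \<le> r" "r < 1"
  shows "of_real r * cis (2 * pi * t) \<in> carleson_box \<beta> j (nat (k mod 2^j))"
proof -
  define q where "q = k div 2^j"
  define m where "m = k mod 2^j"
  have "k = 2^j * q + m"
    unfolding q_def m_def by simp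
  then have "(1/2::real)^j * of_int k = of_int q + (1/2)^j * of_int m"
    by (simp add: power_one_over field_simps)
  moreover have "0 \<le> m"
    unfolding m_def by simp
  ultimately have "(1/2)^j * real (nat m) + \<beta> \<le> t - of_int q"
      "t - of_int q < (1/2)^j * real (nat m + 1) + \<beta>"
    using assms(1,2) by (simp_all add: algebra_simps)
  moreover have "cis (2 * pi * t) = cis (2 * pi * (t - of_int q))"
    using cis_2pi_add_of_int[of "t - of_int q" q] by simp
  ultimately show ?thesis
    unfolding mem_carleson_box_iff m_def[symmetric] using assms(3,4) by metis
qed

lemma carleson_box_top: "carleson_box \<beta> 0 0 = unit_disc"
proof
  show "unit_disc \<subseteq> carleson_box \<beta> 0 0"
  proof
    fix z assume "z \<in> unit_disc"
    obtain t where t: "z = of_real (cmod z) * cis (2 * pi * t)"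
      by (rule polar_decomposition_2pi)
    have "of_int \<lfloor>t - \<beta>\<rfloor> + \<beta> \<le> t" "t < of_int \<lfloor>t - \<beta>\<rfloor> + 1 + \<beta>"
      by linarith+
    then have "of_real (cmod z) * cis (2 * pi * t) \<in> carleson_box \<beta> 0 (nat (\<lfloor>t - \<beta>\<rfloor> mod 2^0))"
      using \<open>z \<in> unit_disc\<close> by (intro polar_mem_carleson_box) (auto simp: unit_disc_def)
    then show "z \<in> carleson_box \<beta> 0 0"
      using t by simp
  qed
qed (rule carleson_box_subset_unit_disc)

lemma carleson_box_polar_bounds:
  assumes "w = of_real r * cis (2 * pi * t)" "1 - (1/2)^j \<le> r" "r < 1"
    and "(1/2)^j * real m + \<beta> \<le> t" "t < (1/2)^j * real (m + 1) + \<beta>" "m < 2^j"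
  shows "cmod w = r" "\<beta> \<le> t" "t < \<beta> + 1" "\<lfloor>(t - \<beta>) * 2^j\<rfloor> = int m"
proof -
  have "(1/2::real)^j \<le> 1"
    by (simp add: power_le_one)
  then show "cmod w = r"
    using assms(1-3) by (simp add: norm_mult)
  have "real (m + 1) \<le> 2^j"
    using assms(6) by (metis Suc_eq_plus1 Suc_leI of_nat_le_iff of_nat_numeral of_nat_power)
  then have "(1/2)^j * real (m + 1) \<le> 1"
    by (simp add: field_simps)
  moreover have "0 \<le> (1/2::real)^j * real m"
    by simp
  ultimately show "\<beta> \<le> t" "t < \<beta> + 1"
    using assms(4,5) by linarith+
  have "real m \<le> (t - \<beta>) * 2^j" "(t - \<beta>) * 2^j < real m + 1"
    using assms(4,5) by (simp_all add: power_one_over field_simps)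
  then show "\<lfloor>(t - \<beta>) * 2^j\<rfloor> = int m"
    by (intro floor_unique) simp_all
qed

lemma carleson_boxes_disjoint:
  assumes "z \<in> carleson_box \<beta> j m" "z \<in> carleson_box \<beta> j m'" "m < 2^j" "m' < 2^j"
  shows "m = m'"
proof -
  obtain r t where z: "z = of_real r * cis (2 * pi * t)" "1 - (1/2)^j \<le> r" "r < 1"
      "(1/2)^j * real m + \<beta> \<le> t" "t < (1/2)^j * real (m + 1) + \<beta>"
    using assms(1) unfolding mem_carleson_box_iff by blast
  obtain r' t' where z': "z = of_real r' * cis (2 * pi * t')" "1 - (1/2)^j \<le> r'" "r' < 1"
      "(1/2)^j * real m' + \<beta> \<le> t'" "t' < (1/2)^j * real (m' + 1) + \<beta>"
    using assms(2) unfolding mem_carleson_box_iff by blast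
  note b = carleson_box_polar_bounds[OF z assms(3)] and b' = carleson_box_polar_bounds[OF z' assms(4)]
  show ?thesis
  proof (cases "r = 0")
    case True
    then have "j = 0"
      using z(2) power_less_one_iff[of "1/2::real" j] by auto
    then show ?thesis
      using assms(3,4) by simp
  next
    case False
    then have "cis (2 * pi * t) = cis (2 * pi * t')"
      using z(1) z'(1) b(1) b'(1) by simp
    then have "t = t'"
      using b(2,3) b'(2,3) by (intro cis_2pi_eq_imp_eq) auto
    then show ?thesis
      using b(4) b'(4) by simp
  qed
qed

lemma sum_indicator_carleson_boxes_le_1: "(\<Sum>m<2^j. indicator (carleson_box \<beta> j m) z) \<le> (1::ennreal)"
proof (cases "\<exists>m0<2^j. z \<in> carleson_box \<beta> j m0")
  case True
  then obtain m0 where m0: "m0 < 2^j" "z \<in> carleson_box \<beta> j m0"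
    by blast
  have "indicator (carleson_box \<beta> j m) z = (if m = m0 then 1 else 0 :: ennreal)" if "m < 2^j" for m
  proof (cases "m = m0")
    case False
    then have "z \<notin> carleson_box \<beta> j m"
      using carleson_boxes_disjoint[OF _ m0(2) that m0(1)] by blast
    then show ?thesis
      using False by simp
  qed (simp add: m0(2))
  then have "(\<Sum>m<2^j. indicator (carleson_box \<beta> j m) z) = (\<Sum>m<2^j. if m = m0 then 1 else 0 :: ennreal)"
    by (intro sum.cong) auto
  then show ?thesis
    using m0(1) by simp
next
  case False
  then show ?thesis
    by (simp add: indicator_def)
qed

lemma carleson_box_sets_lborel [measurable]: "carleson_box \<beta> j m \<in> sets lborel"
proof -
  have box: "carleson_box \<beta> j m = (\<lambda>(r, t). of_real r * cis (2 * pi * t)) `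
      ({1 - (1/2)^j..<1} \<times> {(1/2)^j * real m + \<beta>..<(1/2)^j * real (m + 1) + \<beta>})"
    unfolding set_eq_iff mem_carleson_box_iff image_iff by (fastforce simp del: of_nat_Suc)
  have "\<dots> \<in> sets borel"
    by (rule continuous_image_Times_atLeastLessThan_borel) (simp add: case_prod_unfold continuous_intros)
  then show ?thesis
    by (simp only: box sets_lborel)
qed

lemma norm_1_minus_cnj_mult_le_box_size:
  assumes "z \<in> carleson_box \<beta> j m" "\<zeta> \<in> carleson_box \<beta> j m"
  shows "cmod (1 - cnj \<zeta> * z) \<le> 10 * (1/2)^j"
proof -
  define h :: real where "h = (1/2)^j"
  have h: "0 < h" "h \<le> 1"
    unfolding h_def by (simp_all add: power_le_one)
  obtain r t where z: "z = of_real r * cis (2 * pi * t)" "1 - h \<le> r" "r < 1"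
      "h * real m + \<beta> \<le> t" "t < h * real (m + 1) + \<beta>"
    using assms(1) unfolding mem_carleson_box_iff h_def by blast
  obtain s u where \<zeta>: "\<zeta> = of_real s * cis (2 * pi * u)" "1 - h \<le> s" "s < 1"
      "h * real m + \<beta> \<le> u" "u < h * real (m + 1) + \<beta>"
    using assms(2) unfolding mem_carleson_box_iff h_def by blast
  have rs: "0 \<le> r * s" "r * s \<le> 1" "1 - 2 * h \<le> r * s"
  proof -
    show "0 \<le> r * s" "r * s \<le> 1"
      using z \<zeta> h by (simp_all add: mult_le_one)
    have "0 \<le> (1 - r) * (1 - s)"
      using z \<zeta> by simp
    then show "1 - 2 * h \<le> r * s"
      using z \<zeta> by (simp add: algebra_simps)
  qed
  have "\<bar>t - u\<bar> < h"
    using z(4,5) \<zeta>(4,5) by (simp add: algebra_simps)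
  then have "\<bar>2 * pi * t - 2 * pi * u\<bar> \<le> 2 * pi * h"
    by (simp add: abs_mult flip: right_diff_distrib)
  then have angle: "cmod (1 - cis (2 * pi * t - 2 * pi * u)) \<le> 2 * pi * h"
    using norm_1_minus_cis_le order_trans by blast
  have "1 - cnj \<zeta> * z = of_real (1 - r * s) + of_real (r * s) * (1 - cis (2 * pi * t - 2 * pi * u))"
    using z(1) \<zeta>(1) by (simp add: cis_cnj cis_mult algebra_simps)
  then have "cmod (1 - cnj \<zeta> * z) \<le> \<bar>1 - r * s\<bar> + \<bar>r * s\<bar> * cmod (1 - cis (2 * pi * t - 2 * pi * u))"
    by (metis norm_triangle_ineq norm_mult norm_of_real)
  also have "\<dots> \<le> 2 * h + 1 * (2 * pi * h)"
    using rs angle by (intro add_mono mult_mono) auto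
  also have "\<dots> \<le> 10 * h"
    using pi_less_4 h by simp
  finally show ?thesis
    unfolding h_def .
qed

section \<open>The one-third trick\<close>

lemma third_far_from_dyadic_grid: "(1/2)^j / 3 \<le> \<bar>(1/2)^j * of_int k - 1/3 :: real\<bar>"
proof -
  have "3 * k \<noteq> 2 ^ j"
    using three_not_dvd_power_two[of j] by (metis dvd_triv_left)
  then have "1 \<le> \<bar>real_of_int (3 * k - 2 ^ j)\<bar>"
    by linarith
  also have "real_of_int (3 * k - 2 ^ j) = 3 * 2^j * ((1/2)^j * of_int k - 1/3)"
    by (simp add: power_one_over field_simps)
  finally have "1 \<le> (3 * 2^j) * \<bar>(1/2)^j * of_int k - 1/3 :: real\<bar>"
    by (simp add: abs_mult)
  then have "1 / (3 * 2^j) \<le> \<bar>(1/2)^j * of_int k - 1/3 :: real\<bar>"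
    by (subst pos_divide_le_eq) (simp_all add: mult.commute)
  then show ?thesis
    by (simp add: power_one_over)
qed

lemma one_third_trick:
  fixes lo hi :: real
  assumes "hi - lo < (1/2)^j / 3"
  obtains \<beta> k where "\<beta> \<in> {0, 1/3}" "(1/2)^j * of_int k + \<beta> \<le> lo" "hi < (1/2)^j * (of_int k + 1) + \<beta>"
proof -
  define h :: real where "h = (1/2)^j"
  have "0 < h"
    unfolding h_def by simp
  define k where "k \<beta> = \<lfloor>(lo - \<beta>) / h\<rfloor>" for \<beta>
  have below: "h * of_int (k \<beta>) + \<beta> \<le> lo" and above: "lo < h * (of_int (k \<beta>) + 1) + \<beta>" for \<beta>
    unfolding k_def using floor_divide_lower[OF \<open>0 < h\<close>, of "lo - \<beta>"]
      floor_divide_upper[OF \<open>0 < h\<close>, of "lo - \<beta>"]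
    by (simp_all add: algebra_simps)
  have "\<exists>\<beta>\<in>{0, 1/3}. hi < h * (of_int (k \<beta>) + 1) + \<beta>"
  proof (rule ccontr)
    assume "\<not> ?thesis"
    \<comment> \<open>then the first points of both grids beyond lo lie in (lo, hi], closer than h/3 to each other\<close>
    then have "h * (of_int (k 0) + 1) \<le> hi" "h * (of_int (k (1/3)) + 1) + 1/3 \<le> hi"
      by auto
    then have "\<bar>h * of_int (k 0 - k (1/3)) - 1/3\<bar> < h / 3"
      using above[of 0] above[of "1/3"] assms unfolding h_def[symmetric] of_int_diff
      by (simp only: abs_less_iff right_diff_distrib distrib_left) linarith
    then show False
      using third_far_from_dyadic_grid[of j] unfolding h_def by (meson not_less)
  qed
  then show ?thesis
    using below that unfolding h_def by blast
qed

lemma exists_common_carleson_box: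
  assumes "z \<in> unit_disc" "\<zeta> \<in> unit_disc"
  obtains \<beta> j m where "\<beta> \<in> {0, 1/3}" "m < 2^j" "z \<in> carleson_box \<beta> j m" "\<zeta> \<in> carleson_box \<beta> j m"
    "(1/2)^j \<le> 8 * cmod (1 - cnj \<zeta> * z)"
proof -
  define D where "D = cmod (1 - cnj \<zeta> * z)"
  obtain s where s: "z = of_real (cmod z) * cis (2 * pi * s)" "-1/2 < s" "s \<le> 1/2"
    by (rule polar_decomposition_2pi)
  obtain t where t: "\<zeta> = of_real (cmod \<zeta>) * cis (2 * pi * t)" "-1/2 < t" "t \<le> 1/2"
    by (rule polar_decomposition_2pi)
  have st: "\<bar>s - t\<bar> < 1"
    using s t by linarith
  have norms: "cmod z < 1" "cmod \<zeta> < 1"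
    using assms unfolding unit_disc_def by auto
  define \<delta> where "\<delta> = min \<bar>s - t\<bar> (1 - \<bar>s - t\<bar>)"
  define M where "M = max \<delta> (max (1 - cmod z) (1 - cmod \<zeta>))"
  have "M \<le> D"
    using norm_1_minus_cnj_mult_lower_bounds[of "cmod z" "cmod \<zeta>" s t] norms st
    unfolding M_def D_def \<delta>_def s(1)[symmetric] t(1)[symmetric] by simp
  have "0 < M"
    using norms unfolding M_def by simp
  obtain lo hi s' t' where arc: "hi - lo = \<delta>" "lo \<le> s'" "s' \<le> hi" "lo \<le> t'" "t' \<le> hi"
      "cis (2 * pi * s') = cis (2 * pi * s)" "cis (2 * pi * t') = cis (2 * pi * t)"
    by (rule short_arc_interval[OF st, folded \<delta>_def])
  show ?thesis
  proof (cases "1 < 4 * M")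
    case True
    then show ?thesis
      using that[of 0 0 0] assms \<open>M \<le> D\<close> unfolding carleson_box_top D_def by simp
  next
    case False
    obtain j where j: "(1/2)^Suc j < 4 * M" "4 * M \<le> (1/2)^j"
      using exists_power_bracket[of "1/2" "4 * M"] False \<open>0 < M\<close> by auto
    have "\<delta> \<le> M" "1 - cmod z \<le> M" "1 - cmod \<zeta> \<le> M"
      unfolding M_def by auto
    moreover have "M \<le> (1/2)^j / 4"
      using j(2) by simp
    ultimately have "hi - lo < (1/2)^j / 3" "1 - (1/2)^j \<le> cmod z" "1 - (1/2)^j \<le> cmod \<zeta>"
      using arc(1) \<open>0 < M\<close> by linarith+
    obtain \<beta> k where \<beta>: "\<beta> \<in> {0, 1/3}" "(1/2)^j * of_int k + \<beta> \<le> lo" "hi < (1/2)^j * (of_int k + 1) + \<beta>"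
      using one_third_trick[OF \<open>hi - lo < (1/2)^j / 3\<close>] by blast
    have "of_real (cmod z) * cis (2 * pi * s') \<in> carleson_box \<beta> j (nat (k mod 2^j))"
      using \<beta>(2,3) arc(2,3) norms \<open>1 - (1/2)^j \<le> cmod z\<close> by (intro polar_mem_carleson_box) auto
    then have z_box: "z \<in> carleson_box \<beta> j (nat (k mod 2^j))"
      using arc(6) s(1) by simp
    have "of_real (cmod \<zeta>) * cis (2 * pi * t') \<in> carleson_box \<beta> j (nat (k mod 2^j))"
      using \<beta>(2,3) arc(4,5) norms \<open>1 - (1/2)^j \<le> cmod \<zeta>\<close> by (intro polar_mem_carleson_box) auto
    then have \<zeta>_box: "\<zeta> \<in> carleson_box \<beta> j (nat (k mod 2^j))"
      using arc(7) t(1) by simp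
    have "nat (k mod 2^j) < 2^j"
      by (simp add: nat_less_iff)
    moreover have "(1/2)^j \<le> 8 * D"
      using j(1) \<open>M \<le> D\<close> by simp
    ultimately show ?thesis
      using that \<beta>(1) z_box \<zeta>_box unfolding D_def by blast
  qed
qed

section \<open>Comparison of kernels\<close>

lemma inverse_half_power_square: "1 / ((1/2::real)^j)\<^sup>2 = 4^j"
  by (induction j) (simp_all add: power2_eq_square field_simps)

definition dyadic_kernel :: "real \<Rightarrow> complex \<Rightarrow> complex \<Rightarrow> ennreal" where
  "dyadic_kernel \<beta> z \<zeta> = (\<Sum>j. \<Sum>m<2^j.
     ennreal (4^j) * indicator (carleson_box \<beta> j m) \<zeta> * indicator (carleson_box \<beta> j m) z)"

lemma dyadic_kernel_measurable [measurable]: "(\<lambda>\<zeta>. dyadic_kernel \<beta> z \<zeta>) \<in> borel_measurable lborel"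
  unfolding dyadic_kernel_def by measurable

lemma four_power_le_dyadic_kernel:
  assumes "m < 2^j" "z \<in> carleson_box \<beta> j m" "\<zeta> \<in> carleson_box \<beta> j m"
  shows "ennreal (4^j) \<le> dyadic_kernel \<beta> z \<zeta>"
proof -
  let ?T = "\<lambda>j m. ennreal (4^j) * indicator (carleson_box \<beta> j m) \<zeta> * indicator (carleson_box \<beta> j m) z"
  have "ennreal (4^j) = ?T j m"
    using assms(2,3) by simp
  also have "\<dots> \<le> (\<Sum>m<2^j. ?T j m)"
    using assms(1) by (intro member_le_sum) auto
  also have "\<dots> \<le> (\<Sum>j. \<Sum>m<2^j. ?T j m)"
    using sum_le_suminf[of "\<lambda>j. \<Sum>m<2^j. ?T j m" "{j}"] by simp
  finally show ?thesis
    unfolding dyadic_kernel_def .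
qed

lemma suminf_four_powers_below_le:
  fixes A :: real
  assumes "1 \<le> A"
  shows "(\<Sum>j. ennreal (if 4^j \<le> A then 4^j else 0)) \<le> ennreal (4/3 * A)"
proof -
  obtain L where L: "(1/4)^Suc L < 1 / A" "1 / A \<le> (1/4)^L"
    using exists_power_bracket[of "1/4" "1 / A"] assms by auto
  have "4^L \<le> A" "A < 4 * 4^L"
    using L assms by (simp_all add: power_one_over field_simps)
  have "(4::real)^j \<le> A \<longleftrightarrow> j < Suc L" for j
  proof
    assume "4^j \<le> A"
    then have "(4::real)^j < 4^Suc L"
      using \<open>A < 4 * 4^L\<close> by simp
    then show "j < Suc L"
      by (simp only: power_strict_increasing_iff)
  next
    assume "j < Suc L"
    then have "(4::real)^j \<le> 4^L"
      by (intro power_increasing) auto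
    then show "4^j \<le> A"
      using \<open>4^L \<le> A\<close> by linarith
  qed
  then have "(\<Sum>j. ennreal (if 4^j \<le> A then 4^j else 0)) = (\<Sum>j<Suc L. ennreal (4^j))"
    by (subst suminf_finite[of "{..<Suc L}"]) auto
  also have "\<dots> = ennreal (\<Sum>j<Suc L. 4^j)"
    by (rule sum_ennreal) simp
  also have "(\<Sum>j<Suc L. (4::real)^j) = (4^Suc L - 1) / 3"
    by (simp add: geometric_sum)
  also have "\<dots> \<le> ennreal (4/3 * A)"
    using \<open>4^L \<le> A\<close> by (intro ennreal_leI) simp
  finally show ?thesis .
qed

lemma dyadic_generation_sum_le:
  assumes "\<And>m. z \<in> carleson_box \<beta> j m \<Longrightarrow> \<zeta> \<in> carleson_box \<beta> j m \<Longrightarrow> (4::real)^j \<le> A"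
  shows "(\<Sum>m<2^j. ennreal (4^j) * indicator (carleson_box \<beta> j m) \<zeta> * indicator (carleson_box \<beta> j m) z)
    \<le> ennreal (if 4^j \<le> A then 4^j else 0)"
proof -
  have "(\<Sum>m<2^j. ennreal (4^j) * indicator (carleson_box \<beta> j m) \<zeta> * indicator (carleson_box \<beta> j m) z)
      \<le> (\<Sum>m<2^j. ennreal (if 4^j \<le> A then 4^j else 0) * indicator (carleson_box \<beta> j m) z)"
    using assms by (intro sum_mono) (simp split: split_indicator)
  also have "\<dots> = ennreal (if 4^j \<le> A then 4^j else 0) * (\<Sum>m<2^j. indicator (carleson_box \<beta> j m) z)"
    by (simp add: sum_distrib_left)
  also have "\<dots> \<le> ennreal (if 4^j \<le> A then 4^j else 0)"
    using sum_indicator_carleson_boxes_le_1 mult_left_mono[of _ 1] by fastforce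
  finally show ?thesis .
qed

lemma dyadic_kernel_le_bergman_kernel:
  assumes "z \<in> unit_disc" "\<zeta> \<in> unit_disc"
  shows "ennreal (3/400) * dyadic_kernel \<beta> z \<zeta> \<le> ennreal (1 / (cmod (1 - cnj \<zeta> * z))\<^sup>2)"
proof -
  define D where "D = cmod (1 - cnj \<zeta> * z)"
  define A where "A = 100 / D\<^sup>2"
  have D: "0 < D" "D \<le> 2"
    unfolding D_def using norm_1_minus_cnj_mult_bounds[OF assms] by auto
  have "D\<^sup>2 \<le> 2\<^sup>2"
    using D by (intro power_mono) auto
  then have "1 \<le> A"
    unfolding A_def using D by (simp add: field_simps)
  have shared: "(4::real)^j \<le> A" if "z \<in> carleson_box \<beta> j m" "\<zeta> \<in> carleson_box \<beta> j m" for j m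
  proof -
    have "D\<^sup>2 \<le> (10 * (1/2)^j)\<^sup>2"
      using norm_1_minus_cnj_mult_le_box_size[OF that] D unfolding D_def by (intro power_mono) auto
    then have "1 / ((1/2)^j)\<^sup>2 \<le> A"
      unfolding A_def using D by (simp add: field_simps)
    then show ?thesis
      by (simp add: inverse_half_power_square)
  qed
  have "dyadic_kernel \<beta> z \<zeta> \<le> (\<Sum>j. ennreal (if 4^j \<le> A then 4^j else 0))"
    unfolding dyadic_kernel_def using shared by (intro suminf_le dyadic_generation_sum_le) auto
  also have "\<dots> \<le> ennreal (4/3 * A)"
    using \<open>1 \<le> A\<close> by (rule suminf_four_powers_below_le)
  finally have "ennreal (3/400) * dyadic_kernel \<beta> z \<zeta> \<le> ennreal (3/400) * ennreal (4/3 * A)"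
    by (rule mult_left_mono) simp
  also have "\<dots> = ennreal (1 / D\<^sup>2)"
    unfolding A_def by (simp flip: ennreal_mult)
  finally show ?thesis
    unfolding D_def .
qed

lemma bergman_kernel_le_dyadic_kernels:
  assumes "z \<in> unit_disc" "\<zeta> \<in> unit_disc"
  shows "ennreal (1 / (cmod (1 - cnj \<zeta> * z))\<^sup>2) \<le> ennreal 64 * (dyadic_kernel 0 z \<zeta> + dyadic_kernel (1/3) z \<zeta>)"
proof -
  define D where "D = cmod (1 - cnj \<zeta> * z)"
  obtain \<beta> j m where box: "\<beta> \<in> {0, 1/3}" "m < 2^j" "z \<in> carleson_box \<beta> j m" "\<zeta> \<in> carleson_box \<beta> j m"
      "(1/2)^j \<le> 8 * D"
    using exists_common_carleson_box[OF assms] unfolding D_def by blast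
  have "0 < D"
    unfolding D_def using norm_1_minus_cnj_mult_bounds[OF assms] by simp
  have "((1/2)^j)\<^sup>2 \<le> (8 * D)\<^sup>2"
    using box(5) by (intro power_mono) auto
  then have "1 / D\<^sup>2 \<le> 64 * (1 / ((1/2)^j)\<^sup>2)"
    using \<open>0 < D\<close> by (simp add: field_simps)
  then have "ennreal (1 / D\<^sup>2) \<le> ennreal (64 * 4^j)"
    by (simp add: inverse_half_power_square ennreal_leI)
  also have "\<dots> = ennreal 64 * ennreal (4^j)"
    by (rule ennreal_mult) simp_all
  also have "\<dots> \<le> ennreal 64 * dyadic_kernel \<beta> z \<zeta>"
    using four_power_le_dyadic_kernel[OF box(2-4)] by (rule mult_left_mono) simp
  also have "\<dots> \<le> ennreal 64 * (dyadic_kernel 0 z \<zeta> + dyadic_kernel (1/3) z \<zeta>)"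
    using box(1) by (intro mult_left_mono) (auto simp del: divide_const_simps)
      \<comment> \<open>otherwise simp turns \<beta> = 1/3 into \<beta> * 3 = 1 before substituting\<close>
  finally show ?thesis
    unfolding D_def .
qed

section \<open>Integral operators\<close>

lemma nonneg_L1loc_restrict_measurable:
  assumes "nonneg_L1loc f"
  shows "(\<lambda>\<zeta>. ennreal (f \<zeta>) * indicator unit_disc \<zeta>) \<in> borel_measurable lborel"
proof -
  define K where "K n = cball (0::complex) (1 - 1 / Suc n)" for n
  have "K n \<subseteq> unit_disc" for n
  proof
    fix x assume "x \<in> K n"
    then have "cmod x \<le> 1 - 1 / Suc n"
      unfolding K_def by simp
    moreover have "0 < 1 / real (Suc n)"
      by simp
    ultimately show "x \<in> unit_disc"
      unfolding unit_disc_def mem_Collect_eq by linarith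
  qed
  moreover have "compact (K n)" for n
    unfolding K_def by simp
  ultimately have "set_integrable lborel (K n) f" for n
    using assms unfolding nonneg_L1loc_def by blast
  then have "(\<lambda>\<zeta>. indicator (K n) \<zeta> * f \<zeta>) \<in> borel_measurable lborel" for n
    unfolding set_integrable_def by (simp add: borel_measurable_integrable)
  moreover have "(\<lambda>n. indicator (K n) \<zeta> * f \<zeta>) \<longlonglongrightarrow> indicator unit_disc \<zeta> * f \<zeta>" for \<zeta>
  proof (cases "\<zeta> \<in> unit_disc")
    case True
    then obtain N where "inverse (Suc N) < 1 - cmod \<zeta>"
      using reals_Archimedean[of "1 - cmod \<zeta>"] unfolding unit_disc_def by auto
    then have "\<zeta> \<in> K n" if "N \<le> n" for n
    proof -
      have "1 / Suc n \<le> 1 / Suc N"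
        using that by (intro divide_left_mono) auto
      then show ?thesis
        using \<open>inverse (Suc N) < 1 - cmod \<zeta>\<close> unfolding K_def by (simp add: inverse_eq_divide)
    qed
    then show ?thesis
      using True by (intro tendsto_eventually eventually_sequentiallyI[of N]) simp
  next
    case False
    then have "\<zeta> \<notin> K n" for n
      using \<open>K n \<subseteq> unit_disc\<close> by blast
    then show ?thesis
      using False by simp
  qed
  ultimately have "(\<lambda>\<zeta>. indicator unit_disc \<zeta> * f \<zeta>) \<in> borel_measurable lborel"
    by (rule borel_measurable_LIMSEQ_real[rotated])
  then have "(\<lambda>\<zeta>. ennreal (indicator unit_disc \<zeta> * f \<zeta>)) \<in> borel_measurable lborel"
    by measurable
  moreover have "ennreal (indicator unit_disc \<zeta> * f \<zeta>) = ennreal (f \<zeta>) * indicator unit_disc \<zeta>" for \<zeta>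
    by (simp split: split_indicator)
  ultimately show ?thesis
    by simp
qed

lemma dyadic_op_eq_kernel_integral:
  assumes [measurable]: "(\<lambda>\<zeta>. ennreal (f \<zeta>) * indicator unit_disc \<zeta>) \<in> borel_measurable lborel"
  shows "dyadic_op \<beta> f z = ennreal (1/pi) *
    (\<integral>\<^sup>+\<zeta>. ennreal (f \<zeta>) * indicator unit_disc \<zeta> * dyadic_kernel \<beta> z \<zeta> \<partial>lborel)"
proof -
  define G where "G \<zeta> = ennreal (f \<zeta>) * indicator unit_disc \<zeta>" for \<zeta>
  have [measurable]: "G \<in> borel_measurable lborel"
    unfolding G_def by simp
  define T where "T j m \<zeta> = ennreal (4^j) * indicator (carleson_box \<beta> j m) \<zeta> * indicator (carleson_box \<beta> j m) z"
    for j m \<zeta>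
  have box_term: "ennreal (1 / ((1/2) ^ j)\<^sup>2) * dA_integral (carleson_box \<beta> j m) f * indicator (carleson_box \<beta> j m) z
      = ennreal (1/pi) * (\<integral>\<^sup>+\<zeta>. G \<zeta> * T j m \<zeta> \<partial>lborel)" for j m
  proof -
    have restrict: "G \<zeta> * indicator (carleson_box \<beta> j m) \<zeta> = ennreal (f \<zeta>) * indicator (carleson_box \<beta> j m) \<zeta>"
      for \<zeta>
      using carleson_box_subset_unit_disc[of \<beta> j m] unfolding G_def by (auto split: split_indicator)
    have pointwise: "G \<zeta> * T j m \<zeta> = (ennreal (4^j) * indicator (carleson_box \<beta> j m) z) *
        (ennreal (f \<zeta>) * indicator (carleson_box \<beta> j m) \<zeta>)" for \<zeta>
      unfolding T_def restrict[symmetric] by (simp only: ac_simps)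
    have "(\<lambda>\<zeta>. G \<zeta> * indicator (carleson_box \<beta> j m) \<zeta>) \<in> borel_measurable lborel"
      by measurable
    then have "(\<lambda>\<zeta>. ennreal (f \<zeta>) * indicator (carleson_box \<beta> j m) \<zeta>) \<in> borel_measurable lborel"
      by (simp only: restrict)
    then have "(\<integral>\<^sup>+\<zeta>. G \<zeta> * T j m \<zeta> \<partial>lborel)
        = ennreal (4^j) * indicator (carleson_box \<beta> j m) z * (\<integral>\<^sup>+\<zeta>\<in>carleson_box \<beta> j m. ennreal (f \<zeta>) \<partial>lborel)"
      unfolding pointwise by (rule nn_integral_cmult)
    then show ?thesis
      unfolding dA_integral_def inverse_half_power_square by (simp only: ac_simps)
  qed
  have "dyadic_op \<beta> f z = (\<Sum>j. \<Sum>m<2^j. ennreal (1/pi) * (\<integral>\<^sup>+\<zeta>. G \<zeta> * T j m \<zeta> \<partial>lborel))"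
    unfolding dyadic_op_def box_term ..
  also have "\<dots> = ennreal (1/pi) * (\<Sum>j. \<Sum>m<2^j. \<integral>\<^sup>+\<zeta>. G \<zeta> * T j m \<zeta> \<partial>lborel)"
    by (simp only: sum_distrib_left[symmetric] ennreal_suminf_cmult)
  also have "(\<Sum>j. \<Sum>m<2^j. \<integral>\<^sup>+\<zeta>. G \<zeta> * T j m \<zeta> \<partial>lborel) = (\<Sum>j. \<integral>\<^sup>+\<zeta>. (\<Sum>m<2^j. G \<zeta> * T j m \<zeta>) \<partial>lborel)"
    unfolding T_def by (subst nn_integral_sum) auto
  also have "\<dots> = (\<integral>\<^sup>+\<zeta>. (\<Sum>j. \<Sum>m<2^j. G \<zeta> * T j m \<zeta>) \<partial>lborel)"
    unfolding T_def by (rule nn_integral_suminf[symmetric]) measurable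
  also have "\<dots> = (\<integral>\<^sup>+\<zeta>. G \<zeta> * dyadic_kernel \<beta> z \<zeta> \<partial>lborel)"
    unfolding dyadic_kernel_def T_def by (simp only: sum_distrib_left[symmetric] ennreal_suminf_cmult mult.assoc)
  finally show ?thesis
    unfolding G_def .
qed

lemma bergman_max_eq_kernel_integral:
  assumes "\<And>\<zeta>. \<zeta> \<in> unit_disc \<Longrightarrow> 0 \<le> f \<zeta>"
  shows "bergman_max f z = ennreal (1/pi) *
    (\<integral>\<^sup>+\<zeta>. ennreal (f \<zeta>) * indicator unit_disc \<zeta> * ennreal (1 / (cmod (1 - cnj \<zeta> * z))\<^sup>2) \<partial>lborel)"
proof -
  have "ennreal (f \<zeta> / (cmod (1 - cnj \<zeta> * z))\<^sup>2) * indicator unit_disc \<zeta>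
      = ennreal (f \<zeta>) * indicator unit_disc \<zeta> * ennreal (1 / (cmod (1 - cnj \<zeta> * z))\<^sup>2)" for \<zeta>
    using assms[of \<zeta>] by (simp add: ennreal_mult' [symmetric] divide_inverse split: split_indicator)
  then show ?thesis
    unfolding bergman_max_def dA_integral_def by (simp add: nn_integral_set_ennreal)
qed

lemma dyadic_op_le_bergman_max:
  assumes "nonneg_L1loc f" "z \<in> unit_disc"
  shows "ennreal (3/400) * dyadic_op \<beta> f z \<le> bergman_max f z"
proof -
  let ?G = "\<lambda>\<zeta>. ennreal (f \<zeta>) * indicator unit_disc \<zeta>"
  let ?W = "\<lambda>\<zeta>. ennreal (1 / (cmod (1 - cnj \<zeta> * z))\<^sup>2)"
  have G: "?G \<in> borel_measurable lborel"
    using assms(1) by (rule nonneg_L1loc_restrict_measurable)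
  have "ennreal (3/400) * (\<integral>\<^sup>+\<zeta>. ?G \<zeta> * dyadic_kernel \<beta> z \<zeta> \<partial>lborel)
      = (\<integral>\<^sup>+\<zeta>. ennreal (3/400) * (?G \<zeta> * dyadic_kernel \<beta> z \<zeta>) \<partial>lborel)"
    by (rule nn_integral_cmult[symmetric]) (intro borel_measurable_times_ennreal G dyadic_kernel_measurable)
  also have "\<dots> \<le> (\<integral>\<^sup>+\<zeta>. ?G \<zeta> * ?W \<zeta> \<partial>lborel)"
  proof (rule nn_integral_mono)
    fix \<zeta>
    have "?G \<zeta> * (ennreal (3/400) * dyadic_kernel \<beta> z \<zeta>) \<le> ?G \<zeta> * ?W \<zeta>"
      using dyadic_kernel_le_bergman_kernel[OF assms(2), of \<zeta>] by (auto intro: mult_left_mono split: split_indicator)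
    then show "ennreal (3/400) * (?G \<zeta> * dyadic_kernel \<beta> z \<zeta>) \<le> ?G \<zeta> * ?W \<zeta>"
      by (simp only: ac_simps)
  qed
  finally have kernels: "ennreal (3/400) * (\<integral>\<^sup>+\<zeta>. ?G \<zeta> * dyadic_kernel \<beta> z \<zeta> \<partial>lborel)
      \<le> (\<integral>\<^sup>+\<zeta>. ?G \<zeta> * ?W \<zeta> \<partial>lborel)" .
  have "ennreal (3/400) * dyadic_op \<beta> f z
      = ennreal (1/pi) * (ennreal (3/400) * (\<integral>\<^sup>+\<zeta>. ?G \<zeta> * dyadic_kernel \<beta> z \<zeta> \<partial>lborel))"
    unfolding dyadic_op_eq_kernel_integral[OF G] by (simp only: ac_simps)
  also have "\<dots> \<le> ennreal (1/pi) * (\<integral>\<^sup>+\<zeta>. ?G \<zeta> * ?W \<zeta> \<partial>lborel)"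
    using kernels by (rule mult_left_mono) simp
  also have "\<dots> = bergman_max f z"
    using assms(1) unfolding nonneg_L1loc_def by (intro bergman_max_eq_kernel_integral[symmetric]) auto
  finally show ?thesis .
qed

lemma bergman_max_le_dyadic_ops:
  assumes "nonneg_L1loc f" "z \<in> unit_disc"
  shows "bergman_max f z \<le> ennreal 64 * (\<Sum>\<beta>\<in>{0, 1/3}. dyadic_op \<beta> f z)"
proof -
  let ?G = "\<lambda>\<zeta>. ennreal (f \<zeta>) * indicator unit_disc \<zeta>"
  let ?W = "\<lambda>\<zeta>. ennreal (1 / (cmod (1 - cnj \<zeta> * z))\<^sup>2)"
  let ?I = "\<lambda>\<beta>. \<integral>\<^sup>+\<zeta>. ?G \<zeta> * dyadic_kernel \<beta> z \<zeta> \<partial>lborel"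
  have G: "?G \<in> borel_measurable lborel"
    using assms(1) by (rule nonneg_L1loc_restrict_measurable)
  have "(\<integral>\<^sup>+\<zeta>. ?G \<zeta> * ?W \<zeta> \<partial>lborel)
      \<le> (\<integral>\<^sup>+\<zeta>. ennreal 64 * (?G \<zeta> * dyadic_kernel 0 z \<zeta>) + ennreal 64 * (?G \<zeta> * dyadic_kernel (1/3) z \<zeta>) \<partial>lborel)"
  proof (rule nn_integral_mono)
    fix \<zeta>
    have "?G \<zeta> * ?W \<zeta> \<le> ?G \<zeta> * (ennreal 64 * (dyadic_kernel 0 z \<zeta> + dyadic_kernel (1/3) z \<zeta>))"
      using bergman_kernel_le_dyadic_kernels[OF assms(2), of \<zeta>] by (auto intro: mult_left_mono split: split_indicator)
    then show "?G \<zeta> * ?W \<zeta> \<le> ennreal 64 * (?G \<zeta> * dyadic_kernel 0 z \<zeta>) + ennreal 64 * (?G \<zeta> * dyadic_kernel (1/3) z \<zeta>)"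
      by (simp only: distrib_left ac_simps)
  qed
  also have "\<dots> = ennreal 64 * (?I 0 + ?I (1/3))"
    using G by (subst nn_integral_add) (auto simp: nn_integral_cmult distrib_left)
  finally have kernels: "(\<integral>\<^sup>+\<zeta>. ?G \<zeta> * ?W \<zeta> \<partial>lborel) \<le> ennreal 64 * (?I 0 + ?I (1/3))" .
  have "bergman_max f z = ennreal (1/pi) * (\<integral>\<^sup>+\<zeta>. ?G \<zeta> * ?W \<zeta> \<partial>lborel)"
    using assms(1) unfolding nonneg_L1loc_def by (intro bergman_max_eq_kernel_integral) auto
  also have "\<dots> \<le> ennreal (1/pi) * (ennreal 64 * (?I 0 + ?I (1/3)))"
    using kernels by (rule mult_left_mono) simp
  also have "\<dots> = ennreal 64 * (\<Sum>\<beta>\<in>{0, 1/3}. dyadic_op \<beta> f z)"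
    unfolding dyadic_op_eq_kernel_integral[OF G] by (simp add: distrib_left ac_simps)
  finally show ?thesis .
qed

theorem proposition2p3:
  shows "\<exists>C Ct :: real. C > 0 \<and> Ct > 0 \<and>
    (\<forall>\<beta>0 \<in> {0, 1/3}. \<forall>f. nonneg_L1loc f \<longrightarrow> (\<forall>z \<in> unit_disc.
       ennreal Ct * dyadic_op \<beta>0 f z \<le> bergman_max f z \<and>
       bergman_max f z \<le> ennreal C * (\<Sum>\<beta>\<in>{0, 1/3}. dyadic_op \<beta> f z)))"
  using dyadic_op_le_bergman_max bergman_max_le_dyadic_ops
  by (intro exI[of _ 64] exI[of _ "3/400"]) simp

end
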